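(* For every integer $M\ge1$, the minimum of $D(f)$ over all encoders $f$ such that the support of $f(X)$ has cardinality at most $M$ equals $\frac{1}{6M}$, and this minimum is achieved by an encoder that quantizes $U$ uniformly to $M$ values, i.e. that maps the realization corresponding to $U$ to the index $j$ of the interval $[(j-1)/M, j/M)$ containing $U$.
   Context: Let $U$ be uniformly distributed on $[0,1]$. The sawbridge is the random process $X(t) = t - \mathbf{1}(t\ge U)$, $t\in[0,1]$, viewed as a random element of $L^2[0,1]$; realizations are in one-to-one correspondence with values of $U$. An encoder is a (measurable) map $f:L^2[0,1]\to\mathbb{N}$ with distortion $D(f) = E\big[\int_0^1 (X(t)-E[X(t)\mid f(X)])^2\,dt\big]$. *)

theory Defs
  imports "HOL-Analysis.Analysis"
begin

text \<open>Sawbridge realization for U = u, as a function on [0,1] (extended by 0 outside,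
  representing an element of L2[0,1]).\<close>
definition sawbridge :: "real \<Rightarrow> (real \<Rightarrow> real)" where
  "sawbridge u = (\<lambda>t. if t \<in> {0..1} then t - (if t \<ge> u then 1 else 0) else 0)"

text \<open>U is uniform on [0,1]: probabilities/expectations are Lebesgue measure/integrals over [0,1].\<close>

text \<open>An encoder: a map from (representatives of) L2 functions to naturals such that
  f(X) is a random variable, i.e. u maps measurably to f (sawbridge u).\<close>
definition encoder :: "((real \<Rightarrow> real) \<Rightarrow> nat) \<Rightarrow> bool" where
  "encoder f \<longleftrightarrow> (\<lambda>u. f (sawbridge u)) \<in> measurable (restrict_space lborel {0..1}) (count_space UNIV)"

text \<open>The event {f(X) = k}, as a set of values of U.\<close>
definition cell :: "((real \<Rightarrow> real) \<Rightarrow> nat) \<Rightarrow> nat \<Rightarrow> real set" where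
  "cell f k = {u \<in> {0..1}. f (sawbridge u) = k}"

definition code_support :: "((real \<Rightarrow> real) \<Rightarrow> nat) \<Rightarrow> nat set" where
  "code_support f = {k. measure lborel (cell f k) > 0}"

text \<open>E[X(t) | f(X)] evaluated at the realization U = u (discrete conditioning).\<close>
definition cond_mean :: "((real \<Rightarrow> real) \<Rightarrow> nat) \<Rightarrow> real \<Rightarrow> real \<Rightarrow> real" where
  "cond_mean f t u =
     (let k = f (sawbridge u); p = measure lborel (cell f k) in
      if p = 0 then 0 else (LINT v:cell f k|lborel. sawbridge v t) / p)"

definition distortion :: "((real \<Rightarrow> real) \<Rightarrow> nat) \<Rightarrow> real" where
  "distortion f = (LINT u:{0..1}|lborel. LINT t:{0..1}|lborel. (sawbridge u t - cond_mean f t u)\<^sup>2)"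

end

theory Submission
  imports Defs
begin

text \<open>On a cell \<open>C\<close> of measure \<open>p\<close> the
  conditional mean of \<open>X(t)\<close> is \<open>t - F(t)/p\<close> with \<open>F(t) = |C \<inter> (-\<infinity>, t]|\<close>, and the cell
  contributes \<open>(1/p) \<integral>\<^sub>0\<^sup>1 F (p - F)\<close> to the distortion. Restricted to \<open>C\<close>, the map \<open>F\<close> pushes
  Lebesgue measure forward to the uniform measure on \<open>[0, p]\<close>, so the part of this integral
  over \<open>C\<close> equals \<open>p\<^sup>3/6\<close>; the part over \<open>[0,1] - C\<close> is nonnegative and vanishes when \<open>C\<close> is an
  interval. Hence the distortion is at least \<open>\<Sum> p\<^sub>k\<^sup>2 / 6 \<ge> 1 / (6 n)\<close> for \<open>n\<close> cells of
  positive measure, with equality for \<open>n\<close> intervals of length \<open>1/n\<close>.\<close>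

locale subset_unit_interval =
  fixes C :: "real set"
  assumes sets_C[measurable]: "C \<in> sets lborel" and C_subset: "C \<subseteq> {0..1}"
begin

definition mass :: real where "mass = measure lborel C"

definition cdf :: "real \<Rightarrow> real" where "cdf t = measure lborel (C \<inter> {..t})"

lemma fmeasurable_Int: "X \<in> sets lborel \<Longrightarrow> C \<inter> X \<in> fmeasurable lborel"
  by (rule fmeasurableI2[of "{0..1}"]) (use C_subset in \<open>auto intro: fmeasurableI\<close>)

lemma fmeasurable_C: "C \<in> fmeasurable lborel"
  using fmeasurable_Int[of UNIV] by simp

lemma integrable_indicator_Int:
  "X \<in> sets lborel \<Longrightarrow> integrable lborel (indicator (C \<inter> X) :: real \<Rightarrow> real)"
  using fmeasurableD2[OF fmeasurable_Int] by (intro integrable_real_indicator) (auto simp: less_top)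

lemma integrable_indicator_C: "integrable lborel (indicator C :: real \<Rightarrow> real)"
  using integrable_indicator_Int[of UNIV] by simp

lemma mass_nonneg: "0 \<le> mass"
  by (simp add: mass_def)

lemma cdf_nonneg: "0 \<le> cdf t"
  by (simp add: cdf_def)

lemma cdf_le_mass: "cdf t \<le> mass"
  unfolding cdf_def mass_def by (rule measure_mono_fmeasurable) (use fmeasurable_C in auto)

lemma cdf_add_measure_Ioc: "s \<le> t \<Longrightarrow> cdf t = cdf s + measure lborel (C \<inter> {s<..t})"
  unfolding cdf_def
  by (subst measure_Union[symmetric])
     (auto intro!: fmeasurableD2[OF fmeasurable_Int] arg_cong[where f="measure lborel"])

lemma mono_cdf: "mono cdf"
  using cdf_add_measure_Ioc by (intro monoI) fastforce

lemma cdf_increment_le: "s \<le> t \<Longrightarrow> cdf t - cdf s \<le> t - s"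
  using cdf_add_measure_Ioc[of s t] measure_mono_fmeasurable[of "C \<inter> {s<..t}" "{s<..t}" lborel]
  by (simp add: fmeasurableI)

lemma continuous_on_cdf: "continuous_on S cdf"
proof (rule lipschitz_on_continuous_on)
  show "1-lipschitz_on S cdf"
  proof (rule lipschitz_onI)
    fix s t
    show "dist (cdf s) (cdf t) \<le> 1 * dist s t"
      using cdf_increment_le[of s t] cdf_increment_le[of t s] monoD[OF mono_cdf, of s t]
        monoD[OF mono_cdf, of t s]
      by (cases "s \<le> t") (auto simp: dist_real_def)
  qed simp
qed

lemma borel_measurable_cdf[measurable]: "cdf \<in> borel_measurable borel"
  using mono_cdf by (rule borel_measurable_mono)

lemma cdf_eq_0:
  assumes "t \<le> 0" shows "cdf t = 0"
proof -
  have "C \<inter> {..t} \<subseteq> {0}"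
    using C_subset assms by auto
  then have "cdf t \<le> measure lborel {0::real}"
    unfolding cdf_def
    by (intro measure_mono_fmeasurable) (auto intro!: fmeasurableI_null_sets countable_imp_null_set_lborel)
  then show ?thesis
    using cdf_nonneg[of t] by simp
qed

lemma cdf_eq_mass: "1 \<le> t \<Longrightarrow> cdf t = mass"
  using C_subset by (auto simp: cdf_def mass_def intro!: arg_cong[where f="measure lborel"])

lemma superlevel_set_cdf:
  assumes "0 \<le> x" "x < mass"
  obtains \<tau> where "cdf \<tau> = x" "{t. x < cdf t} = {\<tau><..}"
proof -
  define L where "L = {0..1} \<inter> cdf -` {..x}"
  have "closed L"
    unfolding L_def
    by (intro closed_Int closed_atLeastAtMost continuous_closed_vimage)
       (auto intro: continuous_on_interior[OF continuous_on_cdf[of UNIV]])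
  moreover have "0 \<in> L" "bdd_above L"
    using assms cdf_eq_0[of 0] by (auto simp: L_def intro: bdd_aboveI[of _ 1])
  ultimately have \<tau>: "Sup L \<in> L" "\<And>t. t \<in> L \<Longrightarrow> t \<le> Sup L"
    by (auto intro: closed_contains_Sup cSup_upper)
  have "\<exists>s. Sup L \<le> s \<and> s \<le> 1 \<and> cdf s = x"
    using \<tau>(1) assms cdf_eq_mass[of 1]
    by (intro IVT'[OF _ _ _ continuous_on_cdf]) (auto simp: L_def)
  then obtain s where s: "Sup L \<le> s" "s \<le> 1" "cdf s = x"
    by blast
  then have "s \<in> L"
    using \<tau>(1) by (auto simp: L_def)
  with s \<tau> have cdf_Sup: "cdf (Sup L) = x"
    by force
  have "x < cdf t \<longleftrightarrow> Sup L < t" for t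
  proof
    assume "x < cdf t"
    then show "Sup L < t"
      using monoD[OF mono_cdf, of t "Sup L"] cdf_Sup by (cases "t \<le> Sup L") auto
  next
    assume "Sup L < t"
    then have "t \<notin> L"
      using \<tau>(2) by force
    then show "x < cdf t"
      using \<tau>(1) \<open>Sup L < t\<close> assms cdf_eq_mass[of t] by (auto simp: L_def not_le)
  qed
  then show thesis
    using that[OF cdf_Sup] by auto
qed

lemma measure_Int_greaterThan: "measure lborel (C \<inter> {\<tau><..}) = mass - cdf \<tau>"
proof -
  have "mass = measure lborel ((C \<inter> {..\<tau>}) \<union> (C \<inter> {\<tau><..}))"
    unfolding mass_def by (auto intro: arg_cong[where f="measure lborel"])
  also have "\<dots> = cdf \<tau> + measure lborel (C \<inter> {\<tau><..})"
    unfolding cdf_def by (rule measure_Union) (auto intro!: fmeasurableD2[OF fmeasurable_Int])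
  finally show ?thesis
    by simp
qed

lemma emeasure_superlevel_cdf:
  "emeasure lborel {t\<in>C. x < cdf t} = emeasure lborel ({x<..} \<inter> {0..mass})"
proof -
  consider "x < 0" | "mass \<le> x" | "0 \<le> x" "x < mass"
    by linarith
  then show ?thesis
  proof cases
    case 1
    then have "{t\<in>C. x < cdf t} = C" "{x<..} \<inter> {0..mass} = {0..mass}"
      using cdf_nonneg by (auto intro: less_le_trans)
    then show ?thesis
      using mass_nonneg by (simp add: emeasure_eq_measure2[OF fmeasurable_C] mass_def)
  next
    case 2
    then have "{t\<in>C. x < cdf t} = {}" "{x<..} \<inter> {0..mass} = {}"
      using cdf_le_mass by (auto simp: not_less intro: order.trans)
    then show ?thesis
      by (simp only:)
  next
    case 3
    then obtain \<tau> where \<tau>: "cdf \<tau> = x" "{t. x < cdf t} = {\<tau><..}"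
      by (rule superlevel_set_cdf)
    then have "{t\<in>C. x < cdf t} = C \<inter> {\<tau><..}"
      by blast
    moreover have "{x<..} \<inter> {0..mass} = {x<..mass}"
      using 3 by auto
    ultimately show ?thesis
      using 3 \<tau>(1) measure_Int_greaterThan[of \<tau>]
      by (simp add: emeasure_eq_measure2[OF fmeasurable_Int])
  qed
qed

lemma distr_cdf:
  "distr (density lborel (indicator C)) borel cdf = density lborel (indicator {0..mass})"
proof (rule measure_eqI_lessThan)
  fix x :: real
  have "cdf -` {x<..} \<in> sets lborel"
    using measurable_sets[OF borel_measurable_cdf, of "{x<..}"] by simp
  then have "emeasure (distr (density lborel (indicator C)) borel cdf) {x<..}
      = emeasure lborel (C \<inter> cdf -` {x<..})"
    by (simp add: emeasure_distr emeasure_restricted[OF sets_C])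
  also have "\<dots> = emeasure lborel {t\<in>C. x < cdf t}"
    by (auto intro: arg_cong[where f="emeasure lborel"])
  finally have distr: "emeasure (distr (density lborel (indicator C)) borel cdf) {x<..}
      = emeasure lborel {t\<in>C. x < cdf t}" .
  show "emeasure (distr (density lborel (indicator C)) borel cdf) {x<..} < \<infinity>"
    unfolding distr Collect_conj_eq Collect_mem_eq
    using fmeasurableD2[OF fmeasurable_Int[of "{t. x < cdf t}"]] by (simp add: less_top)
  show "emeasure (distr (density lborel (indicator C)) borel cdf) {x<..}
      = emeasure (density lborel (indicator {0..mass})) {x<..}"
    unfolding distr emeasure_superlevel_cdf by (simp add: emeasure_restricted Int_commute)
qed auto

lemma integral_cdf_parabola: "(LINT t:C|lborel. cdf t * (mass - cdf t)) = mass^3 / 6"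
proof -
  define \<phi> where "\<phi> s = s * (mass - s)" for s
  have [measurable]: "\<phi> \<in> borel_measurable borel"
    unfolding \<phi>_def by measurable
  have density_indicator: "density lborel (indicator S) = density lborel (\<lambda>x. ennreal (indicator S x))"
    for S :: "real set"
    by (simp add: ennreal_indicator)
  have "(LINT t:C|lborel. cdf t * (mass - cdf t)) = integral\<^sup>L lborel (\<lambda>t. indicator C t *\<^sub>R \<phi> (cdf t))"
    by (simp add: set_lebesgue_integral_def \<phi>_def)
  also have "\<dots> = integral\<^sup>L (density lborel (indicator C)) (\<lambda>t. \<phi> (cdf t))"
    unfolding density_indicator by (rule integral_density[symmetric]) auto
  also have "\<dots> = integral\<^sup>L (distr (density lborel (indicator C)) borel cdf) \<phi>"
    by (subst integral_distr) auto
  also have "\<dots> = integral\<^sup>L lborel (\<lambda>s. indicator {0..mass} s *\<^sub>R \<phi> s)"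
    unfolding distr_cdf unfolding density_indicator by (subst integral_density) auto
  also have "\<dots> = (mass * mass^2/2 - mass^3/3) - (mass * 0^2/2 - 0^3/3)"
  proof (rule integral_FTC_atLeastAtMost)
    show "continuous_on {0..mass} \<phi>"
      unfolding \<phi>_def by (intro continuous_intros)
    fix s :: real
    have "((\<lambda>s. mass * s^2/2 - s^3/3) has_real_derivative \<phi> s) (at s within {0..mass})"
      by (auto intro!: derivative_eq_intros simp: \<phi>_def algebra_simps power2_eq_square)
    then show "((\<lambda>s. mass * s^2/2 - s^3/3) has_vector_derivative \<phi> s) (at s within {0..mass})"
      by (simp add: has_real_derivative_iff_has_vector_derivative)
  qed (rule mass_nonneg)
  finally show ?thesis
    by (simp add: power3_eq_cube power2_eq_square)
qed

lemma integral_sawbridge: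
  assumes "t \<in> {0..1}"
  shows "(LINT v:C|lborel. sawbridge v t) = t * mass - cdf t"
proof -
  have "indicator C v *\<^sub>R sawbridge v t = t * indicator C v - indicator (C \<inter> {..t}) v" for v
    using assms by (auto simp: sawbridge_def indicator_def)
  then show ?thesis
    using integrable_indicator_C integrable_indicator_Int[of "{..t}"]
    unfolding set_lebesgue_integral_def by (simp add: mass_def cdf_def)
qed

text \<open>For \<open>u \<in> C\<close> and \<open>t \<in> [0, 1]\<close>, \<open>residual u t\<close> is \<open>X(t) - E[X(t) | U \<in> C]\<close> for the
  realization \<open>U = u\<close>, by \<open>integral_sawbridge\<close>.\<close>
definition residual :: "real \<Rightarrow> real \<Rightarrow> real" where
  "residual u t = cdf t / mass - (if u \<le> t then 1 else 0)"

definition cost :: real where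
  "cost = (LINT t:{0..1}|lborel. cdf t - (cdf t)\<^sup>2 / mass)"

lemma integral_residual_sq:
  assumes "0 < mass"
  shows "(LINT u:C|lborel. (residual u t)\<^sup>2) = cdf t - (cdf t)\<^sup>2 / mass"
proof -
  define \<alpha> where "\<alpha> = cdf t / mass"
  have "indicator C u *\<^sub>R (residual u t)\<^sup>2 =
      \<alpha>\<^sup>2 * indicator C u - (2 * \<alpha> - 1) * indicator (C \<inter> {..t}) u" for u :: real
    by (auto simp: residual_def \<alpha>_def indicator_def power2_eq_square algebra_simps)
  then have "(LINT u:C|lborel. (residual u t)\<^sup>2) = \<alpha>\<^sup>2 * mass - (2 * \<alpha> - 1) * cdf t"
    using integrable_indicator_C integrable_indicator_Int[of "{..t}"]
    unfolding set_lebesgue_integral_def by (simp add: mass_def cdf_def)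
  also have "\<dots> = cdf t - (cdf t)\<^sup>2 / mass"
    using assms by (simp add: \<alpha>_def field_simps power2_eq_square)
  finally show ?thesis .
qed

lemma
  assumes "0 < mass"
  shows set_integrable_residual: "set_integrable lborel C (\<lambda>u. LINT t:{0..1}|lborel. (residual u t)\<^sup>2)"
    and integral_residual: "(LINT u:C|lborel. LINT t:{0..1}|lborel. (residual u t)\<^sup>2) = cost"
proof -
  define F where "F = (\<lambda>(u, t). indicator C u * (indicator {0..1} t * (residual u t)\<^sup>2))"
  have F_measurable[measurable]: "F \<in> borel_measurable (lborel \<Otimes>\<^sub>M lborel)"
    unfolding F_def residual_def by measurable
  have residual_bound: "\<bar>residual u t\<bar> \<le> 1" for u t
    using assms cdf_nonneg[of t] cdf_le_mass[of t] by (auto simp: residual_def)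
  have integrable_F: "integrable (lborel \<Otimes>\<^sub>M lborel) F"
  proof (rule integrableI_bounded_set[where A="{0..1} \<times> {0..1}" and B=1])
    show "AE x in lborel \<Otimes>\<^sub>M lborel. x \<in> {0..1} \<times> {0..1} \<longrightarrow> norm (F x) \<le> 1"
      using residual_bound by (auto simp: F_def indicator_def abs_square_le_1)
    show "AE x in lborel \<Otimes>\<^sub>M lborel. x \<notin> {0..1} \<times> {0..1} \<longrightarrow> F x = 0"
      using C_subset by (intro AE_I2) (auto simp: F_def indicator_def split: prod.splits)
  qed (auto simp: lborel.emeasure_pair_measure_Times)
  have inner_F: "(\<lambda>u. \<integral>t. F (u, t) \<partial>lborel) =
      (\<lambda>u. indicator C u *\<^sub>R (LINT t:{0..1}|lborel. (residual u t)\<^sup>2))"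
    by (simp add: F_def set_lebesgue_integral_def)
  show "set_integrable lborel C (\<lambda>u. LINT t:{0..1}|lborel. (residual u t)\<^sup>2)"
    using lborel_pair.integrable_fst'[OF integrable_F] unfolding set_integrable_def inner_F .
  have "(LINT u:C|lborel. LINT t:{0..1}|lborel. (residual u t)\<^sup>2) = (\<integral>u. \<integral>t. F (u, t) \<partial>lborel \<partial>lborel)"
    unfolding inner_F set_lebesgue_integral_def ..
  also have "\<dots> = (\<integral>t. \<integral>u. F (u, t) \<partial>lborel \<partial>lborel)"
    using integrable_F
    by (rule lborel_pair.Fubini_integral[symmetric, where f="\<lambda>u t. F (u, t)", simplified])
  also have "\<dots> = (\<integral>t. indicator {0..1} t * (LINT u:C|lborel. (residual u t)\<^sup>2) \<partial>lborel)"
    unfolding F_def set_lebesgue_integral_def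
    by (simp add: mult.left_commute[of "indicator C _"] flip: integral_mult_right_zero)
  also have "\<dots> = cost"
    unfolding cost_def integral_residual_sq[OF assms, symmetric] set_lebesgue_integral_def by simp
  finally show "(LINT u:C|lborel. LINT t:{0..1}|lborel. (residual u t)\<^sup>2) = cost" .
qed

lemma cost_eq_excess:
  assumes "0 < mass"
  shows "cost = mass\<^sup>2 / 6 + (LINT t:{0..1} - C|lborel. cdf t * (mass - cdf t)) / mass"
proof -
  define g where "g = (\<lambda>t. cdf t * (mass - cdf t))"
  have integrable: "set_integrable lborel {0..1} g"
    unfolding g_def by (intro borel_integrable_atLeastAtMost' continuous_intros continuous_on_cdf)
  have "{0..1} = C \<union> ({0..1} - C)"
    using C_subset by auto
  then have "(LINT t:{0..1}|lborel. g t) = (LINT t:C \<union> ({0..1} - C)|lborel. g t)"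
    by simp
  also have "\<dots> = (LINT t:C|lborel. g t) + (LINT t:{0..1} - C|lborel. g t)"
    using set_integrable_subset[OF integrable] C_subset sets_C by (intro set_integral_Un) auto
  finally have split: "(LINT t:{0..1}|lborel. g t) = mass^3 / 6 + (LINT t:{0..1} - C|lborel. g t)"
    by (simp add: g_def integral_cdf_parabola)
  have "cost = (LINT t:{0..1}|lborel. g t) / mass"
    using assms unfolding cost_def g_def set_lebesgue_integral_def
    by (simp add: field_simps power2_eq_square flip: integral_divide_zero)
  then show ?thesis
    using assms unfolding split by (simp add: g_def add_divide_distrib power3_eq_cube power2_eq_square)
qed

lemma cost_ge: "0 < mass \<Longrightarrow> mass\<^sup>2 / 6 \<le> cost"
  using cdf_nonneg cdf_le_mass unfolding cost_eq_excess set_lebesgue_integral_def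
  by (auto intro!: integral_nonneg_AE AE_I2 divide_nonneg_pos simp: indicator_def)

lemma cost_eq:
  assumes "0 < mass" and "\<And>t. t \<in> {0..1} - C \<Longrightarrow> cdf t = 0 \<or> cdf t = mass"
  shows "cost = mass\<^sup>2 / 6"
proof -
  have "indicator ({0..1} - C) t *\<^sub>R (cdf t * (mass - cdf t)) = 0" for t
    using assms(2)[of t] by (cases "t \<in> {0..1} - C") auto
  then have "(LINT t:{0..1} - C|lborel. cdf t * (mass - cdf t)) = 0"
    unfolding set_lebesgue_integral_def by (simp only: integral_zero)
  then show ?thesis
    using cost_eq_excess[OF assms(1)] by simp
qed

end

lemma borel_measurable_sawbridge[measurable]:
  assumes [measurable]: "u \<in> borel_measurable M" "t \<in> borel_measurable M"
  shows "(\<lambda>x. sawbridge (u x) (t x)) \<in> borel_measurable M"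
  unfolding sawbridge_def by measurable

locale finite_encoder =
  fixes f :: "(real \<Rightarrow> real) \<Rightarrow> nat"
  assumes encoder: "encoder f" and finite_support: "finite (code_support f)"
begin

definition code :: "real \<Rightarrow> nat" where
  "code u = (if u \<in> {0..1} then f (sawbridge u) else 0)"

definition cell_mean :: "nat \<Rightarrow> real \<Rightarrow> real" where
  "cell_mean k t = (if measure lborel (cell f k) = 0 then 0
     else (LINT v:cell f k|lborel. sawbridge v t) / measure lborel (cell f k))"

definition error :: "real \<Rightarrow> real" where
  "error u = (LINT t:{0..1}|lborel. (sawbridge u t - cell_mean (code u) t)\<^sup>2)"

lemma measurable_code[measurable]: "code \<in> measurable lborel (count_space UNIV)"
  using encoder unfolding encoder_def code_def
  by (subst (asm) measurable_restrict_space_iff[where c=0]) auto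

lemma cell_eq_vimage_code: "cell f k = code -` {k} \<inter> {0..1}"
  by (auto simp: cell_def code_def)

lemma sets_cell[measurable]: "cell f k \<in> sets lborel"
proof -
  have "code -` {k} \<inter> space lborel \<inter> {0..1} \<in> sets lborel"
    using measurable_sets[OF measurable_code, of "{k}"] by (intro sets.Int) auto
  then show ?thesis
    by (simp add: cell_eq_vimage_code)
qed

sublocale cell: subset_unit_interval "cell f k" for k
  by unfold_locales (fact sets_cell, auto simp: cell_def)

lemma borel_measurable_cell_mean[measurable]: "cell_mean k \<in> borel_measurable lborel"
  unfolding cell_mean_def set_lebesgue_integral_def by measurable

lemma borel_measurable_error[measurable]: "error \<in> borel_measurable lborel"
  unfolding error_def set_lebesgue_integral_def
  by (rule measurable_compose_countable[OF _ measurable_code]) measurable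

lemma distortion_eq_integral_error: "distortion f = (LINT u:{0..1}|lborel. error u)"
  unfolding distortion_def set_lebesgue_integral_def
  by (rule Bochner_Integration.integral_cong[OF refl])
     (auto simp: indicator_def error_def code_def cond_mean_def cell_mean_def Let_def
        set_lebesgue_integral_def)

lemma mass_cell_pos: "k \<in> code_support f \<Longrightarrow> 0 < cell.mass k"
  by (simp add: code_support_def cell.mass_def)

lemma null_sets_cell: "k \<notin> code_support f \<Longrightarrow> cell f k \<in> null_sets lborel"
  using cell.fmeasurable_C[of k] measure_nonneg[of lborel "cell f k"]
  by (intro null_setsI) (auto simp: code_support_def emeasure_eq_measure2)

lemma AE_indicator_eq_sum_cells:
  "AE u in lborel. indicator {0..1} u = (\<Sum>k\<in>code_support f. indicator (cell f k) u :: real)"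
proof -
  have "(\<Union>k\<in>- code_support f. cell f k) \<in> null_sets lborel"
    using null_sets_cell by (intro null_sets_UN') auto
  then show ?thesis
  proof (rule AE_mp[OF AE_not_in], intro AE_I2 impI)
    fix u assume u: "u \<notin> (\<Union>k\<in>- code_support f. cell f k)"
    show "indicator {0..1} u = (\<Sum>k\<in>code_support f. indicator (cell f k) u :: real)"
    proof (cases "u \<in> {0..1}")
      case True
      then have "u \<in> cell f (f (sawbridge u))"
        and "indicator (cell f k) u = (if k = f (sawbridge u) then 1 else 0 :: real)" for k
        by (auto simp: cell_def)
      with u True show ?thesis
        using finite_support by auto
    next
      case False
      then have "indicator (cell f k) u = (0::real)" for k
        by (auto simp: cell_def indicator_def)
      with False show ?thesis
        by simp
    qed
  qed
qed

lemma sum_measure_cells: "(\<Sum>k\<in>code_support f. cell.mass k) = 1"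
proof -
  have "1 = (LINT u|lborel. indicator {0..1::real} u :: real)"
    by simp
  also have "\<dots> = (LINT u|lborel. (\<Sum>k\<in>code_support f. indicator (cell f k) u))"
    using AE_indicator_eq_sum_cells by (rule integral_cong_AE[rotated 2]) auto
  also have "\<dots> = (\<Sum>k\<in>code_support f. cell.mass k)"
    using cell.integrable_indicator_C by (simp add: cell.mass_def)
  finally show ?thesis ..
qed

lemma cell_mean_eq:
  "k \<in> code_support f \<Longrightarrow> t \<in> {0..1} \<Longrightarrow> cell_mean k t = t - cell.cdf k t / cell.mass k"
  using cell.integral_sawbridge[of t k] mass_cell_pos[of k]
  by (simp add: cell_mean_def cell.mass_def[symmetric] field_simps)

lemma error_eq_integral_residual:
  assumes "k \<in> code_support f" and "u \<in> cell f k"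
  shows "error u = (LINT t:{0..1}|lborel. (cell.residual k u t)\<^sup>2)"
proof -
  have "u \<in> {0..1}" "code u = k"
    using assms(2) by (auto simp: cell_def code_def)
  then show ?thesis
    unfolding error_def using assms(1)
    by (intro set_lebesgue_integral_cong) (auto simp: cell_mean_eq cell.residual_def sawbridge_def)
qed

lemma
  assumes "k \<in> code_support f"
  shows set_integrable_error_cell: "set_integrable lborel (cell f k) error"
    and set_integral_error_cell: "(LINT u:cell f k|lborel. error u) = cell.cost k"
proof -
  have error_eq: "\<forall>u. u \<in> cell f k \<longrightarrow> error u = (LINT t:{0..1}|lborel. (cell.residual k u t)\<^sup>2)"
    using error_eq_integral_residual[OF assms] by blast
  show "set_integrable lborel (cell f k) error"
    using cell.set_integrable_residual[OF mass_cell_pos[OF assms]] error_eq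
    by (subst set_integrable_cong[OF refl refl]) auto
  show "(LINT u:cell f k|lborel. error u) = cell.cost k"
    using cell.integral_residual[OF mass_cell_pos[OF assms]] error_eq
    by (subst set_lebesgue_integral_cong[OF sets_cell]) auto
qed

lemma distortion_eq_sum_cost: "distortion f = (\<Sum>k\<in>code_support f. cell.cost k)"
proof -
  have "distortion f = (LINT u|lborel. indicator {0..1} u * error u)"
    unfolding distortion_eq_integral_error set_lebesgue_integral_def by simp
  also have "\<dots> = (LINT u|lborel. (\<Sum>k\<in>code_support f. indicator (cell f k) u * error u))"
    using AE_indicator_eq_sum_cells
    by (intro integral_cong_AE) (auto elim!: AE_mp simp: sum_distrib_right)
  also have "\<dots> = (\<Sum>k\<in>code_support f. LINT u:cell f k|lborel. error u)"
    using set_integrable_error_cell unfolding set_integrable_def set_lebesgue_integral_def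
    by (subst Bochner_Integration.integral_sum) auto
  also have "\<dots> = (\<Sum>k\<in>code_support f. cell.cost k)"
    by (simp add: set_integral_error_cell)
  finally show ?thesis .
qed

lemma card_code_support_pos: "0 < card (code_support f)"
  using sum_measure_cells finite_support by (auto simp: card_gt_0_iff)

theorem distortion_ge: "1 / (6 * card (code_support f)) \<le> distortion f"
proof -
  let ?S = "code_support f"
  have "1 \<le> (\<Sum>k\<in>?S. (cell.mass k)\<^sup>2) * card ?S"
    using sum_squared_le_sum_of_squares[of cell.mass ?S] sum_measure_cells by simp
  then have "1 / (6 * card ?S) \<le> (\<Sum>k\<in>?S. (cell.mass k)\<^sup>2 / 6)"
    using card_code_support_pos by (simp add: field_simps flip: sum_divide_distrib)
  also have "\<dots> \<le> distortion f"
    unfolding distortion_eq_sum_cost by (intro sum_mono cell.cost_ge mass_cell_pos)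
  finally show ?thesis .
qed

end

lemma inj_on_sawbridge: "inj_on sawbridge {0..1}"
proof (rule inj_onI, rule ccontr)
  fix u v :: real
  assume uv: "u \<in> {0..1}" "v \<in> {0..1}" "sawbridge u = sawbridge v" "u \<noteq> v"
  have "sawbridge u (min u v) \<noteq> sawbridge v (min u v)"
    using uv(1,2,4) by (auto simp: sawbridge_def min_def)
  with uv(3) show False
    by simp
qed

lemma nat_floor_add_one_eq_iff:
  fixes M j :: nat and u :: real
  assumes "M \<ge> 1" "0 \<le> u" "j \<ge> 1"
  shows "nat \<lfloor>real M * u\<rfloor> + 1 = j \<longleftrightarrow> (real j - 1) / real M \<le> u \<and> u < real j / real M"
proof -
  have "nat \<lfloor>real M * u\<rfloor> + 1 = j \<longleftrightarrow> \<lfloor>real M * u\<rfloor> = int j - 1"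
    using assms by (auto simp: nat_eq_iff)
  also have "\<dots> \<longleftrightarrow> real j - 1 \<le> real M * u \<and> real M * u < real j"
    by (simp add: floor_eq_iff)
  also have "\<dots> \<longleftrightarrow> (real j - 1) / real M \<le> u \<and> u < real j / real M"
    using assms by (simp add: field_simps)
  finally show ?thesis .
qed

text \<open>The null realization \<open>U = 1\<close> and functions that are no realization at all get the
  otherwise unused index \<open>0\<close>.\<close>
definition uniform_quantizer :: "nat \<Rightarrow> (real \<Rightarrow> real) \<Rightarrow> nat" where
  "uniform_quantizer M g = (if g \<in> sawbridge ` {0..<1}
     then nat \<lfloor>real M * inv_into {0..<1} sawbridge g\<rfloor> + 1 else 0)"

lemma uniform_quantizer_sawbridge:
  assumes "u \<in> {0..1}"
  shows "uniform_quantizer M (sawbridge u) = (if u < 1 then nat \<lfloor>real M * u\<rfloor> + 1 else 0)"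
proof (cases "u < 1")
  case True
  have "inj_on sawbridge {0..<1}"
    using inj_on_sawbridge by (rule inj_on_subset) auto
  with True assms show ?thesis
    by (simp add: uniform_quantizer_def)
next
  case False
  then have "sawbridge u \<notin> sawbridge ` {0..<1}"
    using assms inj_on_sawbridge by (auto dest: inj_onD)
  with False show ?thesis
    by (simp add: uniform_quantizer_def)
qed

context
  fixes M :: nat
  assumes M_pos: "M \<ge> 1"
begin

lemma quantizer_interval_subset:
  assumes "j \<in> {1..M}"
  shows "{(real j - 1) / real M..<real j / real M} \<subseteq> {0..1}"
proof -
  have "0 \<le> (real j - 1) / real M" "real j / real M \<le> 1"
    using assms M_pos by auto
  then show ?thesis
    by auto
qed

lemma measure_quantizer_interval:
  "measure lborel {(real j - 1) / real M..<real j / real M} = 1 / real M"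
  using M_pos by (simp add: divide_right_mono diff_divide_distrib)

lemma uniform_quantizer_eq_iff:
  assumes "u \<in> {0..1}"
  shows "uniform_quantizer M (sawbridge u) = j \<longleftrightarrow>
    (if j \<in> {1..M} then u \<in> {(real j - 1) / real M..<real j / real M} else j = 0 \<and> u = 1)"
proof (cases "u < 1")
  case True
  have "nat \<lfloor>real M * u\<rfloor> < M"
    using True assms M_pos by (simp add: nat_less_iff floor_less_iff)
  then show ?thesis
    using True assms nat_floor_add_one_eq_iff[OF M_pos, of u j]
    by (auto simp: uniform_quantizer_sawbridge)
next
  case False
  then show ?thesis
    using assms M_pos by (auto simp: uniform_quantizer_sawbridge field_simps)
qed

lemma cell_uniform_quantizer:
  "cell (uniform_quantizer M) j =
    (if j \<in> {1..M} then {(real j - 1) / real M..<real j / real M} else if j = 0 then {1} else {})"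
proof (cases "j \<in> {1..M}")
  case True
  with quantizer_interval_subset[OF True] show ?thesis
    unfolding cell_def if_P[OF True] using uniform_quantizer_eq_iff[of _ j, unfolded if_P[OF True]]
    by blast
next
  case False
  then show ?thesis
    unfolding cell_def using uniform_quantizer_eq_iff[of _ j, unfolded if_not_P[OF False]] by auto
qed

lemma encoder_uniform_quantizer: "encoder (uniform_quantizer M)"
  unfolding encoder_def
proof (subst measurable_count_space_eq2_countable, intro conjI ballI)
  fix j :: nat
  have "(\<lambda>u. uniform_quantizer M (sawbridge u)) -` {j} \<inter> space (restrict_space lborel {0..1})
      = cell (uniform_quantizer M) j"
    by (auto simp: cell_def)
  also have "\<dots> \<in> sets (restrict_space lborel {0..1})"
    unfolding cell_uniform_quantizer using quantizer_interval_subset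
    by (auto simp: sets_restrict_space_iff)
  finally show "(\<lambda>u. uniform_quantizer M (sawbridge u)) -` {j} \<inter> space (restrict_space lborel {0..1})
      \<in> sets (restrict_space lborel {0..1})" .
qed auto

lemma code_support_uniform_quantizer: "code_support (uniform_quantizer M) = {1..M}"
  using M_pos by (auto simp: code_support_def cell_uniform_quantizer measure_quantizer_interval)

lemma distortion_uniform_quantizer: "distortion (uniform_quantizer M) = 1 / (6 * real M)"
proof -
  interpret finite_encoder "uniform_quantizer M"
    using encoder_uniform_quantizer code_support_uniform_quantizer by unfold_locales auto
  have cost: "cell.cost k = (1 / real M)\<^sup>2 / 6" if k: "k \<in> {1..M}" for k
  proof -
    define c d where "c = (real k - 1) / real M" and "d = real k / real M"
    have cell: "cell (uniform_quantizer M) k = {c..<d}"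
      using k by (simp add: cell_uniform_quantizer c_def d_def)
    have mass: "cell.mass k = 1 / real M"
      unfolding cell.mass_def unfolding cell c_def d_def by (rule measure_quantizer_interval)
    have "cell.cdf k t = 0 \<or> cell.cdf k t = cell.mass k" if "t \<notin> {c..<d}" for t
    proof -
      have "{c..<d} \<inter> {..t} = {} \<or> {c..<d} \<inter> {..t} = {c..<d}"
        using that by auto
      then show ?thesis
        unfolding cell.cdf_def cell.mass_def unfolding cell by auto
    qed
    then show ?thesis
      using M_pos mass by (subst cell.cost_eq) (auto simp: cell)
  qed
  have "distortion (uniform_quantizer M) = (\<Sum>k\<in>{1..M}. (1 / real M)\<^sup>2 / 6)"
    unfolding distortion_eq_sum_cost code_support_uniform_quantizer by (rule sum.cong[OF refl cost])
  also have "\<dots> = 1 / (6 * real M)"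
    using M_pos by (simp add: power2_eq_square)
  finally show ?thesis .
qed

lemma uniform_quantizer_interval:
  "u \<in> {0..<1} \<Longrightarrow> (real j - 1) / real M \<le> u \<Longrightarrow> u < real j / real M \<Longrightarrow>
    uniform_quantizer M (sawbridge u) = j"
  using nat_floor_add_one_eq_iff[OF M_pos, of u j]
  by (cases "j = 0") (auto simp: uniform_quantizer_sawbridge)

end

theorem mainTheorem5:
  fixes M :: nat
  assumes "M \<ge> 1"
  shows "(\<forall>f. encoder f \<and> finite (code_support f) \<and> card (code_support f) \<le> M
            \<longrightarrow> distortion f \<ge> 1 / (6 * real M))
       \<and> (\<exists>f. encoder f \<and> finite (code_support f) \<and> card (code_support f) \<le> M
            \<and> (\<forall>u \<in> {0..<1}. \<forall>j::nat. (real j - 1) / real M \<le> u \<and> u < real j / real M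
                 \<longrightarrow> f (sawbridge u) = j)
            \<and> distortion f = 1 / (6 * real M))"
proof (intro conjI allI impI exI[of _ "uniform_quantizer M"] ballI)
  fix f assume f: "encoder f \<and> finite (code_support f) \<and> card (code_support f) \<le> M"
  then interpret finite_encoder f
    by unfold_locales auto
  have "1 / (6 * real M) \<le> 1 / (6 * card (code_support f))"
    using f card_code_support_pos by (intro divide_left_mono) auto
  then show "1 / (6 * real M) \<le> distortion f"
    using distortion_ge by linarith
qed (use assms in \<open>auto simp: encoder_uniform_quantizer code_support_uniform_quantizer
       distortion_uniform_quantizer uniform_quantizer_interval\<close>)

end
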